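(* Let $0<\delta<\frac12$. Let $g\in\mathrm{Diff}_0^3(I)$ and $f\in\mathrm{Diff}_+^{1,\delta}(I)$ be such that $p_\delta(g\circ f)\le C$ for some $C>0$, and let $m$ be the minimum of $f'$ on $I$. Then $\psi=\log(g')$ satisfies $|\psi(t)-\psi(s)|\le \frac{C+p_\delta(f)}{m^\delta}|t-s|^\delta$ for all $s,t\in I$.
   Context: $I=[0,1]$. $\mathrm{Diff}_+^1(I)$ is the set of $C^1$ diffeomorphisms of $I$ fixing $0$ and $1$; $\mathrm{Diff}_+^{1,\delta}(I)$ is the set of $f\in\mathrm{Diff}_+^1(I)$ with $f'$ Hölder of exponent $\delta$. $\mathrm{Diff}_0^3(I)$ is the set of $C^3$ diffeomorphisms $f$ of $I$ fixing $0$ and $1$ with $f'(0)=f'(1)=1$. For $f\in\mathrm{Diff}_+^{1,\delta}(I)$, $p_\delta(f)=|\log(f'(0))|+\sup_{t_1\ne t_2\in I}\frac{|\log(f'(t_2))-\log(f'(t_1))|}{|t_2-t_1|^\delta}$ (a finite number). *)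

theory Defs
  imports "HOL-Analysis.Analysis"
begin

abbreviation I01 :: "real set" where "I01 \<equiv> {0..1}"

definition D :: "(real \<Rightarrow> real) \<Rightarrow> real \<Rightarrow> real" where
  "D f x = vector_derivative f (at x within I01)"

fun Dn :: "nat \<Rightarrow> (real \<Rightarrow> real) \<Rightarrow> real \<Rightarrow> real" where
  "Dn 0 f = f"
| "Dn (Suc n) f = D (Dn n f)"

definition Ck_on_I :: "nat \<Rightarrow> (real \<Rightarrow> real) \<Rightarrow> bool" where
  "Ck_on_I k f \<longleftrightarrow>
     (\<forall>j<k. \<forall>x\<in>I01. Dn j f differentiable (at x within I01))
     \<and> continuous_on I01 (Dn k f)"

definition Diff_k :: "nat \<Rightarrow> (real \<Rightarrow> real) \<Rightarrow> bool" where
  "Diff_k k f \<longleftrightarrow> bij_betw f I01 I01 \<and> f 0 = 0 \<and> f 1 = 1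
     \<and> Ck_on_I k f \<and> Ck_on_I k (inv_into I01 f)"

definition Diff1 :: "(real \<Rightarrow> real) \<Rightarrow> bool" where
  "Diff1 f \<longleftrightarrow> Diff_k 1 f"

definition Diff1_delta :: "real \<Rightarrow> (real \<Rightarrow> real) \<Rightarrow> bool" where
  "Diff1_delta \<delta> f \<longleftrightarrow> Diff1 f \<and>
     (\<exists>K. \<forall>s\<in>I01. \<forall>t\<in>I01. \<bar>D f t - D f s\<bar> \<le> K * \<bar>t - s\<bar> powr \<delta>)"

definition Diff0_3 :: "(real \<Rightarrow> real) \<Rightarrow> bool" where
  "Diff0_3 f \<longleftrightarrow> Diff_k 3 f \<and> D f 0 = 1 \<and> D f 1 = 1"

definition p_delta :: "real \<Rightarrow> (real \<Rightarrow> real) \<Rightarrow> real" where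
  "p_delta \<delta> f = \<bar>ln (D f 0)\<bar> +
     Sup {\<bar>ln (D f t2) - ln (D f t1)\<bar> / \<bar>t2 - t1\<bar> powr \<delta> | t1 t2.
            t1 \<in> I01 \<and> t2 \<in> I01 \<and> t1 \<noteq> t2}"

end

theory Submission
  imports Defs
begin

text \<open>By the chain rule, \<open>ln (g \<circ> f)' = ln f' + (ln g') \<circ> f\<close>, so
  \<open>(ln g') \<circ> f\<close> is the difference of two \<open>\<delta>\<close>-H\<ouml>lder functions whose
  H\<ouml>lder constants are bounded by \<open>C\<close> and \<open>p\<^sub>\<delta>(f)\<close>. Writing \<open>s = f x\<close>,
  \<open>t = f y\<close>, the mean value theorem gives \<open>m \<bar>y - x\<bar> \<le> \<bar>t - s\<bar>\<close>, which turns
  the H\<ouml>lder estimate in \<open>x, y\<close> into the claimed one in \<open>s, t\<close>. Finiteness of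
  the suprema in \<open>p\<^sub>\<delta>\<close> needs \<open>ln (g \<circ> f)'\<close> to be \<open>\<delta>\<close>-H\<ouml>lder a priori,
  which holds because \<open>g'\<close> is \<open>C\<^sup>1\<close>, hence Lipschitz.\<close>

lemma at_within_I01_nontrivial: "x \<in> I01 \<Longrightarrow> at x within I01 \<noteq> bot"
  using trivial_limit_within[of x I01] islimpt_Icc[of 0 1 x] by auto

lemma D_has_real_derivative:
  assumes "x \<in> I01" "f differentiable (at x within I01)"
  shows "(f has_real_derivative D f x) (at x within I01)"
  using assms vector_derivative_works[of f "at x within I01"]
  by (simp add: D_def has_real_derivative_iff_has_vector_derivative)

lemma D_eqI:
  assumes "x \<in> I01" "(f has_real_derivative d) (at x within I01)"
  shows "D f x = d"
  using vector_derivative_within[OF at_within_I01_nontrivial[OF assms(1)]] assms(2)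
  by (simp add: D_def has_real_derivative_iff_has_vector_derivative)

lemma Dn_D: "Dn n (D f) = Dn (Suc n) f"
  by (induction n) simp_all

lemma Ck_on_I_mono:
  assumes "Ck_on_I k f" "j \<le> k"
  shows "Ck_on_I j f"
proof (cases "j = k")
  case False
  with assms have "\<forall>x\<in>I01. Dn j f differentiable (at x within I01)"
    unfolding Ck_on_I_def by auto
  then have "continuous_on I01 (Dn j f)"
    by (simp add: continuous_on_eq_continuous_within differentiable_imp_continuous_within)
  with assms show ?thesis
    unfolding Ck_on_I_def by auto
qed (use assms in simp)

lemma Ck_on_I_Suc_D: "Ck_on_I (Suc k) f \<Longrightarrow> Ck_on_I k (D f)"
  unfolding Ck_on_I_def Dn_D by auto

lemma Ck_on_I_1_has_derivative:
  "Ck_on_I 1 f \<Longrightarrow> x \<in> I01 \<Longrightarrow> (f has_real_derivative D f x) (at x within I01)"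
  unfolding Ck_on_I_def using D_has_real_derivative by auto

lemma Ck_on_I_1_continuous_D: "Ck_on_I 1 f \<Longrightarrow> continuous_on I01 (D f)"
  unfolding Ck_on_I_def by simp

lemma Ck_on_I_1_continuous: "Ck_on_I 1 f \<Longrightarrow> continuous_on I01 f"
  unfolding Ck_on_I_def
  by (simp add: continuous_on_eq_continuous_within differentiable_imp_continuous_within)

lemma Ck_on_I_1_MVT:
  assumes "Ck_on_I 1 f" "x \<in> I01" "y \<in> I01" "x < y"
  obtains z where "x < z" "z < y" "f y - f x = (y - x) * D f z"
proof -
  have "\<exists>l z. x < z \<and> z < y \<and> DERIV f z :> l \<and> f y - f x = (y - x) * l"
  proof (rule MVT)
    show "continuous_on {x..y} f"
      using Ck_on_I_1_continuous[OF assms(1)] by (rule continuous_on_subset) (use assms in auto)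
    fix z :: real assume z: "x < z" "z < y"
    with assms have "0 < z" "z < 1"
      by auto
    then have "(f has_real_derivative D f z) (at z)"
      using Ck_on_I_1_has_derivative[OF assms(1), of z] at_within_Icc_at[of 0 z 1] by simp
    then show "f differentiable (at z)"
      using real_differentiable_def by blast
  qed (fact assms(4))
  then obtain l z where z: "x < z" "z < y" "DERIV f z :> l" "f y - f x = (y - x) * l"
    by blast
  have "z \<in> I01"
    using z assms by auto
  then have "D f z = l"
    using D_eqI has_field_derivative_at_within z(3) by blast
  then show thesis
    using that z by blast
qed

lemma D_cong:
  assumes "\<And>y. y \<in> I01 \<Longrightarrow> f y = g y" "x \<in> I01"
  shows "D f x = D g x"
proof -
  have "(f has_vector_derivative v) (at x within I01) \<longleftrightarrow>
        (g has_vector_derivative v) (at x within I01)" for v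
    using has_vector_derivative_transform_within[OF _ zero_less_one assms(2), of f v g]
      has_vector_derivative_transform_within[OF _ zero_less_one assms(2), of g v f]
      assms(1) by auto
  then show ?thesis
    by (simp add: D_def vector_derivative_def)
qed

lemma D_comp:
  assumes "Ck_on_I 1 f" "Ck_on_I 1 g" "f ` I01 \<subseteq> I01" "x \<in> I01"
  shows "D (g \<circ> f) x = D f x * D g (f x)"
proof -
  have "(f has_vector_derivative D f x) (at x within I01)"
    using Ck_on_I_1_has_derivative[OF assms(1,4)]
    by (simp add: has_real_derivative_iff_has_vector_derivative)
  moreover have "f x \<in> I01"
    using assms(3,4) by blast
  then have "(g has_real_derivative D g (f x)) (at (f x) within I01)"
    by (rule Ck_on_I_1_has_derivative[OF assms(2)])
  then have "(g has_vector_derivative D g (f x)) (at (f x) within f ` I01)"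
    by (intro has_vector_derivative_within_subset[OF _ assms(3)])
      (simp add: has_real_derivative_iff_has_vector_derivative)
  ultimately have "((g \<circ> f) has_vector_derivative D f x * D g (f x)) (at x within I01)"
    using vector_diff_chain_within by fastforce
  then show ?thesis
    using assms(4) by (simp add: D_eqI has_real_derivative_iff_has_vector_derivative)
qed

lemma Diff_k_mono: "Diff_k k f \<Longrightarrow> j \<le> k \<Longrightarrow> Diff_k j f"
  unfolding Diff_k_def using Ck_on_I_mono by blast

lemma Diff_k_D_nonzero:
  assumes "Diff_k 1 f" "x \<in> I01"
  shows "D f x \<noteq> 0"
proof -
  let ?h = "inv_into I01 f"
  have f: "bij_betw f I01 I01" "Ck_on_I 1 f" "Ck_on_I 1 ?h"
    using assms(1) unfolding Diff_k_def by auto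
  then have "f ` I01 \<subseteq> I01" "\<And>y. y \<in> I01 \<Longrightarrow> (?h \<circ> f) y = y"
    by (auto simp: bij_betw_def)
  then have "D f x * D ?h (f x) = D (\<lambda>y. y) x"
    using D_comp[OF f(2,3) _ assms(2)] D_cong[of "?h \<circ> f" "\<lambda>y. y", OF _ assms(2)] by simp
  also have "\<dots> = 1"
    using assms(2) by (intro D_eqI DERIV_ident[THEN has_field_derivative_at_within])
  finally show ?thesis
    by auto
qed

lemma continuous_on_Icc_pos:
  fixes F :: "real \<Rightarrow> real"
  assumes "continuous_on {a..b} F" "\<And>x. x \<in> {a..b} \<Longrightarrow> F x \<noteq> 0"
    and "z \<in> {a..b}" "0 < F z" "x \<in> {a..b}"
  shows "0 < F x"
proof (rule ccontr)
  assume "\<not> 0 < F x"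
  then have Fx: "F x \<le> 0" by simp
  obtain w where "min x z \<le> w" "w \<le> max x z" "F w = 0"
  proof (cases "x \<le> z")
    case True
    have "continuous_on {x..z} F"
      using assms(1) by (rule continuous_on_subset) (use assms in auto)
    then show ?thesis
      using IVT'[of F x 0 z] True Fx assms(4) that by auto
  next
    case False
    have "continuous_on {z..x} F"
      using assms(1) by (rule continuous_on_subset) (use assms in auto)
    then show ?thesis
      using IVT2'[of F x 0 z] False Fx assms(4) that by auto
  qed
  moreover have "w \<in> {a..b}"
    using calculation assms(3,5) by auto
  ultimately show False
    using assms(2) by blast
qed

lemma Diff_k_D_pos:
  assumes "Diff_k 1 f" "x \<in> I01"
  shows "0 < D f x"
proof -
  have f: "f 0 = 0" "f 1 = 1" "Ck_on_I 1 f"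
    using assms(1) unfolding Diff_k_def by auto
  obtain z where z: "0 < z" "z < 1" "f 1 - f 0 = (1 - 0) * D f z"
    using Ck_on_I_1_MVT[OF f(3), of 0 1] by auto
  show ?thesis
  proof (rule continuous_on_Icc_pos[of 0 1 "D f" z x])
    show "continuous_on I01 (D f)"
      using Ck_on_I_1_continuous_D[OF f(3)] .
    show "z \<in> I01" "0 < D f z"
      using z f by auto
  qed (use assms Diff_k_D_nonzero in blast)+
qed

lemma Diff_k_Inf_D:
  assumes "Diff_k 1 f"
  shows "0 < Inf (D f ` I01)" "x \<in> I01 \<Longrightarrow> Inf (D f ` I01) \<le> D f x"
proof -
  have "continuous_on I01 (D f)"
    using assms Ck_on_I_1_continuous_D unfolding Diff_k_def by blast
  then obtain x0 where x0: "x0 \<in> I01" "\<And>y. y \<in> I01 \<Longrightarrow> D f x0 \<le> D f y"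
    using continuous_attains_inf[of I01 "D f"] by auto
  then have "Inf (D f ` I01) = D f x0"
    by (intro cInf_eq_minimum) auto
  then show "0 < Inf (D f ` I01)" "x \<in> I01 \<Longrightarrow> Inf (D f ` I01) \<le> D f x"
    using Diff_k_D_pos[OF assms x0(1)] x0(2) by auto
qed

lemma Diff_k_Inf_D_mult_le:
  assumes "Diff_k 1 f" "x \<in> I01" "y \<in> I01"
  shows "Inf (D f ` I01) * \<bar>y - x\<bar> \<le> \<bar>f y - f x\<bar>"
proof -
  let ?m = "Inf (D f ` I01)"
  have ck: "Ck_on_I 1 f"
    using assms(1) unfolding Diff_k_def by blast
  have less: "?m * (v - u) \<le> f v - f u" if uv: "u \<in> I01" "v \<in> I01" "u < v" for u v
  proof -
    obtain z where z: "u < z" "z < v" "f v - f u = (v - u) * D f z"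
      using Ck_on_I_1_MVT[OF ck uv] by blast
    have "?m \<le> D f z"
      using Diff_k_Inf_D(2)[OF assms(1)] z uv by auto
    then show ?thesis
      using z(3) uv(3) by (simp add: mult.commute mult_left_mono)
  qed
  have "0 < ?m"
    using Diff_k_Inf_D(1)[OF assms(1)] .
  then show ?thesis
    using less[of x y] less[of y x] assms(2,3)
    by (cases x y rule: linorder_cases) (auto simp: abs_if)
qed

lemma abs_ln_diff_le:
  fixes a b m :: real
  assumes "0 < m" "m \<le> a" "m \<le> b"
  shows "\<bar>ln a - ln b\<bar> \<le> \<bar>a - b\<bar> / m"
proof -
  have ordered: "\<bar>ln u - ln v\<bar> \<le> \<bar>u - v\<bar> / m" if "m \<le> u" "m \<le> v" "v \<le> u" for u v
  proof -
    have "ln u - ln v = ln (u / v)"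
      using that assms(1) by (simp add: ln_div)
    also have "\<dots> \<le> u / v - 1"
      using that assms(1) by (intro ln_le_minus_one) auto
    also have "\<dots> = (u - v) / v"
      using that assms(1) by (simp add: field_simps)
    also have "\<dots> \<le> (u - v) / m"
      using that assms(1) by (intro divide_left_mono) auto
    finally have "ln u - ln v \<le> (u - v) / m" .
    moreover have "ln v \<le> ln u"
      using that assms by simp
    ultimately show ?thesis
      using that by simp
  qed
  show ?thesis
  proof (cases "b \<le> a")
    case True
    then show ?thesis using ordered[of a b] assms by simp
  next
    case False
    then show ?thesis using ordered[of b a] assms by (simp add: abs_minus_commute)
  qed
qed

definition holder_I01 :: "real \<Rightarrow> (real \<Rightarrow> real) \<Rightarrow> bool" where
  "holder_I01 \<delta> \<phi> \<longleftrightarrow> (\<exists>K. \<forall>s\<in>I01. \<forall>t\<in>I01. \<bar>\<phi> t - \<phi> s\<bar> \<le> K * \<bar>t - s\<bar> powr \<delta>)"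

definition holder_seminorm :: "real \<Rightarrow> (real \<Rightarrow> real) \<Rightarrow> real" where
  "holder_seminorm \<delta> \<phi> = Sup {\<bar>\<phi> t2 - \<phi> t1\<bar> / \<bar>t2 - t1\<bar> powr \<delta> | t1 t2.
     t1 \<in> I01 \<and> t2 \<in> I01 \<and> t1 \<noteq> t2}"

lemma Diff1_delta_iff: "Diff1_delta \<delta> f \<longleftrightarrow> Diff_k 1 f \<and> holder_I01 \<delta> (D f)"
  by (simp add: Diff1_delta_def Diff1_def holder_I01_def)

lemma p_delta_eq: "p_delta \<delta> f = \<bar>ln (D f 0)\<bar> + holder_seminorm \<delta> (\<lambda>t. ln (D f t))"
  by (simp add: p_delta_def holder_seminorm_def)

lemma holder_seminorm_le:
  assumes "holder_I01 \<delta> \<phi>" "s \<in> I01" "t \<in> I01"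
  shows "\<bar>\<phi> t - \<phi> s\<bar> \<le> holder_seminorm \<delta> \<phi> * \<bar>t - s\<bar> powr \<delta>"
proof (cases "s = t")
  case False
  let ?Q = "{\<bar>\<phi> t2 - \<phi> t1\<bar> / \<bar>t2 - t1\<bar> powr \<delta> | t1 t2. t1 \<in> I01 \<and> t2 \<in> I01 \<and> t1 \<noteq> t2}"
  obtain K where K: "\<forall>s\<in>I01. \<forall>t\<in>I01. \<bar>\<phi> t - \<phi> s\<bar> \<le> K * \<bar>t - s\<bar> powr \<delta>"
    using assms(1) unfolding holder_I01_def by blast
  have "bdd_above ?Q"
    by (rule bdd_aboveI[of _ K]) (use K in \<open>auto simp: divide_le_eq\<close>)
  moreover have "\<bar>\<phi> t - \<phi> s\<bar> / \<bar>t - s\<bar> powr \<delta> \<in> ?Q"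
    using False assms(2,3) by blast
  ultimately have "\<bar>\<phi> t - \<phi> s\<bar> / \<bar>t - s\<bar> powr \<delta> \<le> holder_seminorm \<delta> \<phi>"
    unfolding holder_seminorm_def by (rule cSup_upper[rotated])
  then show ?thesis
    using False by (simp add: divide_le_eq)
qed simp

lemma holder_seminorm_nonneg: "holder_I01 \<delta> \<phi> \<Longrightarrow> 0 \<le> holder_seminorm \<delta> \<phi>"
  using holder_seminorm_le[of \<delta> \<phi> 0 1] by (simp add: order_trans)

lemma holder_I01_cong: "(\<And>t. t \<in> I01 \<Longrightarrow> \<phi> t = \<psi> t) \<Longrightarrow> holder_I01 \<delta> \<phi> \<Longrightarrow> holder_I01 \<delta> \<psi>"
  unfolding holder_I01_def by simp

lemma holder_I01_add:
  assumes "holder_I01 \<delta> \<phi>" "holder_I01 \<delta> \<psi>"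
  shows "holder_I01 \<delta> (\<lambda>t. \<phi> t + \<psi> t)"
proof -
  obtain K L where
    K: "\<forall>s\<in>I01. \<forall>t\<in>I01. \<bar>\<phi> t - \<phi> s\<bar> \<le> K * \<bar>t - s\<bar> powr \<delta>" and
    L: "\<forall>s\<in>I01. \<forall>t\<in>I01. \<bar>\<psi> t - \<psi> s\<bar> \<le> L * \<bar>t - s\<bar> powr \<delta>"
    using assms unfolding holder_I01_def by blast
  have "\<bar>\<phi> t + \<psi> t - (\<phi> s + \<psi> s)\<bar> \<le> (K + L) * \<bar>t - s\<bar> powr \<delta>"
    if "s \<in> I01" "t \<in> I01" for s t
    using K L that by (fastforce simp: distrib_right)
  then show ?thesis
    unfolding holder_I01_def by blast
qed

lemma holder_I01_exponent_mono:
  assumes "holder_I01 \<beta> \<phi>" "\<alpha> \<le> \<beta>"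
  shows "holder_I01 \<alpha> \<phi>"
proof -
  obtain K where K: "\<forall>s\<in>I01. \<forall>t\<in>I01. \<bar>\<phi> t - \<phi> s\<bar> \<le> K * \<bar>t - s\<bar> powr \<beta>"
    using assms(1) unfolding holder_I01_def by blast
  have "\<bar>\<phi> t - \<phi> s\<bar> \<le> \<bar>K\<bar> * \<bar>t - s\<bar> powr \<alpha>" if "s \<in> I01" "t \<in> I01" for s t
  proof -
    have "\<bar>\<phi> t - \<phi> s\<bar> \<le> \<bar>K\<bar> * \<bar>t - s\<bar> powr \<beta>"
      using K that by (meson abs_ge_self mult_right_mono order_trans powr_ge_zero)
    also have "\<dots> \<le> \<bar>K\<bar> * \<bar>t - s\<bar> powr \<alpha>"
      using that assms(2) by (intro mult_left_mono powr_mono') auto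
    finally show ?thesis .
  qed
  then show ?thesis
    unfolding holder_I01_def by blast
qed

lemma holder_I01_comp:
  assumes "holder_I01 \<alpha> \<phi>" "holder_I01 1 f" "f ` I01 \<subseteq> I01" "0 \<le> \<alpha>"
  shows "holder_I01 \<alpha> (\<phi> \<circ> f)"
proof -
  obtain K M where
    K: "\<forall>s\<in>I01. \<forall>t\<in>I01. \<bar>\<phi> t - \<phi> s\<bar> \<le> K * \<bar>t - s\<bar> powr \<alpha>" and
    M: "\<forall>s\<in>I01. \<forall>t\<in>I01. \<bar>f t - f s\<bar> \<le> M * \<bar>t - s\<bar>"
    using assms(1,2) unfolding holder_I01_def by auto
  have "\<bar>\<phi> (f t) - \<phi> (f s)\<bar> \<le> (\<bar>K\<bar> * \<bar>M\<bar> powr \<alpha>) * \<bar>t - s\<bar> powr \<alpha>"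
    if st: "s \<in> I01" "t \<in> I01" for s t
  proof -
    have "f s \<in> I01" "f t \<in> I01"
      using assms(3) st by blast+
    then have "\<bar>\<phi> (f t) - \<phi> (f s)\<bar> \<le> \<bar>K\<bar> * \<bar>f t - f s\<bar> powr \<alpha>"
      using K by (meson abs_ge_self mult_right_mono order_trans powr_ge_zero)
    also have "\<dots> \<le> \<bar>K\<bar> * (\<bar>M\<bar> * \<bar>t - s\<bar>) powr \<alpha>"
    proof -
      have "\<bar>f t - f s\<bar> \<le> \<bar>M\<bar> * \<bar>t - s\<bar>"
        using M st by (meson abs_ge_self abs_ge_zero mult_right_mono order_trans)
      then show ?thesis
        using assms(4) by (intro mult_left_mono powr_mono2) auto
    qed
    also have "\<dots> = (\<bar>K\<bar> * \<bar>M\<bar> powr \<alpha>) * \<bar>t - s\<bar> powr \<alpha>"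
      by (simp add: powr_mult)
    finally show ?thesis .
  qed
  then show ?thesis
    unfolding holder_I01_def comp_def by blast
qed

lemma holder_I01_ln:
  assumes "holder_I01 \<delta> F" "0 < m" "\<And>t. t \<in> I01 \<Longrightarrow> m \<le> F t"
  shows "holder_I01 \<delta> (\<lambda>t. ln (F t))"
proof -
  obtain K where K: "\<forall>s\<in>I01. \<forall>t\<in>I01. \<bar>F t - F s\<bar> \<le> K * \<bar>t - s\<bar> powr \<delta>"
    using assms(1) unfolding holder_I01_def by blast
  have "\<bar>ln (F t) - ln (F s)\<bar> \<le> K / m * \<bar>t - s\<bar> powr \<delta>" if "s \<in> I01" "t \<in> I01" for s t
  proof -
    have "\<bar>ln (F t) - ln (F s)\<bar> \<le> \<bar>F t - F s\<bar> / m"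
      using abs_ln_diff_le assms(2,3) that by blast
    also have "\<dots> \<le> K * \<bar>t - s\<bar> powr \<delta> / m"
      using K that assms(2) by (intro divide_right_mono) auto
    finally show ?thesis
      by simp
  qed
  then show ?thesis
    unfolding holder_I01_def by blast
qed

lemma Ck_on_I_1_holder_1:
  assumes "Ck_on_I 1 f"
  shows "holder_I01 1 f"
proof -
  have "bounded (D f ` I01)"
    by (intro compact_imp_bounded compact_continuous_image Ck_on_I_1_continuous_D assms compact_Icc)
  then obtain M where M: "\<forall>y\<in>D f ` I01. norm y \<le> M"
    unfolding bounded_iff ..
  have "\<bar>f t - f s\<bar> \<le> M * \<bar>t - s\<bar> powr 1" if "s \<in> I01" "t \<in> I01" for s t
  proof -
    have "norm (f t - f s) \<le> M * norm (t - s)"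
      using M Ck_on_I_1_has_derivative[OF assms] that
      by (intro field_differentiable_bound[of I01]) auto
    then show ?thesis
      by simp
  qed
  then show ?thesis
    unfolding holder_I01_def by blast
qed

lemma ln_D_comp:
  assumes "Diff_k 1 g" "Diff_k 1 f" "x \<in> I01"
  shows "ln (D (g \<circ> f) x) = ln (D f x) + ln (D g (f x))"
proof -
  have f: "Ck_on_I 1 f" "f ` I01 \<subseteq> I01" and g: "Ck_on_I 1 g"
    using assms(1,2) unfolding Diff_k_def bij_betw_def by auto
  then have "0 < D g (f x)"
    using Diff_k_D_pos[OF assms(1)] assms(3) by blast
  then show ?thesis
    using D_comp[OF f(1) g f(2) assms(3)] Diff_k_D_pos[OF assms(2,3)] by (simp add: ln_mult)
qed

lemma holder_I01_ln_D:
  assumes "Diff_k 1 f" "holder_I01 \<delta> (D f)"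
  shows "holder_I01 \<delta> (\<lambda>t. ln (D f t))"
  using holder_I01_ln[OF assms(2) Diff_k_Inf_D[OF assms(1)]] .

lemma holder_I01_ln_D_comp:
  assumes "0 \<le> \<delta>" "\<delta> \<le> 1" "Diff_k 2 g" "Diff_k 1 f" "holder_I01 \<delta> (D f)"
  shows "holder_I01 \<delta> (\<lambda>t. ln (D (g \<circ> f) t))"
proof -
  have g: "Diff_k 1 g"
    using Diff_k_mono[OF assms(3)] by simp
  have "Ck_on_I 1 (D g)"
    using assms(3) Ck_on_I_Suc_D[of 1 g] unfolding Diff_k_def numeral_2_eq_2 by simp
  then have "holder_I01 1 (\<lambda>t. ln (D g t))"
    using holder_I01_ln_D[OF g] Ck_on_I_1_holder_1 by blast
  moreover have "holder_I01 1 f" "f ` I01 \<subseteq> I01"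
    using assms(4) Ck_on_I_1_holder_1 unfolding Diff_k_def bij_betw_def by auto
  ultimately have "holder_I01 1 ((\<lambda>t. ln (D g t)) \<circ> f)"
    by (rule holder_I01_comp) simp
  then have "holder_I01 \<delta> (\<lambda>t. ln (D g (f t)))"
    using holder_I01_exponent_mono assms(2) unfolding comp_def by blast
  with holder_I01_ln_D[OF assms(4,5)] have "holder_I01 \<delta> (\<lambda>t. ln (D f t) + ln (D g (f t)))"
    by (rule holder_I01_add)
  then show ?thesis
    by (rule holder_I01_cong[rotated]) (simp add: ln_D_comp[OF g assms(4)])
qed

lemma holder_bound_through_inverse:
  assumes "Diff_k 1 f" "0 \<le> \<delta>" "holder_I01 \<delta> \<Phi>" "holder_I01 \<delta> \<Psi>"
    and "\<And>x. x \<in> I01 \<Longrightarrow> \<phi> (f x) = \<Phi> x - \<Psi> x" and "s \<in> I01" "t \<in> I01"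
  shows "\<bar>\<phi> t - \<phi> s\<bar> \<le>
    (holder_seminorm \<delta> \<Phi> + holder_seminorm \<delta> \<Psi>) / Inf (D f ` I01) powr \<delta> * \<bar>t - s\<bar> powr \<delta>"
proof -
  let ?m = "Inf (D f ` I01)" and ?S = "holder_seminorm \<delta> \<Phi> + holder_seminorm \<delta> \<Psi>"
  have "f ` I01 = I01"
    using assms(1) unfolding Diff_k_def bij_betw_def by auto
  then obtain x y where xy: "x \<in> I01" "y \<in> I01" "f x = s" "f y = t"
    using assms(6,7) by (metis imageE)
  have m: "0 < ?m"
    using Diff_k_Inf_D(1)[OF assms(1)] .
  have "\<bar>\<phi> t - \<phi> s\<bar> = \<bar>(\<Phi> y - \<Phi> x) - (\<Psi> y - \<Psi> x)\<bar>"
    using assms(5)[OF xy(1)] assms(5)[OF xy(2)] unfolding xy(3,4) by simp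
  also have "\<dots> \<le> ?S * \<bar>y - x\<bar> powr \<delta>"
    using holder_seminorm_le[OF assms(3) xy(1,2)] holder_seminorm_le[OF assms(4) xy(1,2)]
    unfolding distrib_right by linarith
  also have "\<dots> \<le> ?S * (\<bar>t - s\<bar> / ?m) powr \<delta>"
  proof -
    have "\<bar>y - x\<bar> \<le> \<bar>t - s\<bar> / ?m"
      using Diff_k_Inf_D_mult_le[OF assms(1) xy(1,2)] xy(3,4) m by (simp add: pos_le_divide_eq mult.commute)
    then show ?thesis
      using assms(2) holder_seminorm_nonneg[OF assms(3)] holder_seminorm_nonneg[OF assms(4)]
      by (intro mult_left_mono powr_mono2) auto
  qed
  also have "\<dots> = ?S / ?m powr \<delta> * \<bar>t - s\<bar> powr \<delta>"
    using m by (simp add: powr_divide)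
  finally show ?thesis .
qed

theorem mainTheorem13:
  fixes \<delta> C :: real and f g :: "real \<Rightarrow> real"
  assumes "0 < \<delta>" "\<delta> < 1/2"
    and "Diff0_3 g" and "Diff1_delta \<delta> f"
    and "C > 0" and "p_delta \<delta> (g \<circ> f) \<le> C"
  shows "\<forall>s\<in>I01. \<forall>t\<in>I01.
           \<bar>ln (D g t) - ln (D g s)\<bar>
             \<le> (C + p_delta \<delta> f) / (Inf (D f ` I01)) powr \<delta> * \<bar>t - s\<bar> powr \<delta>"
proof (intro ballI)
  fix s t :: real assume st: "s \<in> I01" "t \<in> I01"
  have f: "Diff_k 1 f" "holder_I01 \<delta> (D f)"
    using assms(4) by (simp_all add: Diff1_delta_iff)
  have g: "Diff_k 2 g" "Diff_k 1 g"
    using assms(3) Diff_k_mono unfolding Diff0_3_def by fastforce+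
  let ?m = "Inf (D f ` I01)" and ?\<Phi> = "\<lambda>t. ln (D (g \<circ> f) t)" and ?\<Psi> = "\<lambda>t. ln (D f t)"
  have "\<bar>ln (D g t) - ln (D g s)\<bar>
      \<le> (holder_seminorm \<delta> ?\<Phi> + holder_seminorm \<delta> ?\<Psi>) / ?m powr \<delta> * \<bar>t - s\<bar> powr \<delta>"
  proof (rule holder_bound_through_inverse[OF f(1) _ _ _ _ st])
    show "holder_I01 \<delta> ?\<Phi>"
      using holder_I01_ln_D_comp[OF _ _ g(1) f] assms(1,2) by simp
    show "holder_I01 \<delta> ?\<Psi>"
      using holder_I01_ln_D[OF f] .
    show "ln (D g (f x)) = ?\<Phi> x - ?\<Psi> x" if "x \<in> I01" for x
      using ln_D_comp[OF g(2) f(1) that] by simp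
  qed (use assms(1) in simp)
  also have "\<dots> \<le> (C + p_delta \<delta> f) / ?m powr \<delta> * \<bar>t - s\<bar> powr \<delta>"
    using assms(6) p_delta_eq[of \<delta> "g \<circ> f"] p_delta_eq[of \<delta> f]
    by (intro mult_right_mono divide_right_mono) auto
  finally show "\<bar>ln (D g t) - ln (D g s)\<bar> \<le> (C + p_delta \<delta> f) / ?m powr \<delta> * \<bar>t - s\<bar> powr \<delta>" .
qed

end
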